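(* Let $F$ be an indexed group with degree map $\deg$, $G$ a group, $H\le G$, and $\Phi$ a set of homomorphisms $F\to G$ satisfying: (I) if $h\in H$ and $\varphi\in\Phi$ then $f\mapsto h^{-1}\varphi(f)h$ lies in $\Phi$; (II) for any $\varphi\in\Phi$ and $h\in H_\varphi$, the homomorphism $\psi$ with $\psi(f)=\varphi(f)$ for $\deg f=0$ and $\psi(f_1)=\varphi(f_1)h$ for a degree-one element $f_1$ lies in $\Phi$. Then each similarity class in $\Phi$ consists of exactly $|H|$ elements. More precisely, for each $\varphi\in\Phi$: 1) the number of distinct tails of elements of $\Phi$ similar to $\varphi$ equals $|H:H_\varphi|$; 2) for each $\psi\in\Phi$ similar to $\varphi$, the number of elements of $\Phi$ with the same tail as $\psi$ equals $|H_\varphi|$.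
   Context: An indexed group is a group $F$ with a surjective homomorphism $\deg: F\to\mathbb{Z}$. Notation: $x^y=y^{-1}xy$, $H^y=y^{-1}Hy$, $C(X)$ is the centraliser. The $\varphi$-core of $H$ is $H_\varphi=\bigcap_{f\in F}H^{\varphi(f)}\cap C(\{\varphi(f)\mid\deg f=0\})$. The tail of $\varphi\in\Phi$ is the pair $(\varphi_0,\varphi_H)$, where $\varphi_0$ is the restriction of $\varphi$ to $\ker\deg$ and $\varphi_H$ is the map from $F$ to the set of left cosets of $H$ in $G$ sending $f$ to $\varphi(f)H$. Two homomorphisms $\varphi,\psi\in\Phi$ are similar if there is $h\in H$ with $\psi(f)=h\varphi(f)h^{-1}$ for all $f$ of degree zero and $\psi(f)H=h\varphi(f)H$ for all $f\in F$. Cardinalities are cardinal numbers (groups need not be finite). *)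

theory Defs
  imports "HOL-Algebra.Elementary_Groups" "HOL-Library.Equipollence"
begin

definition indexed_group :: "('f, 'm) monoid_scheme \<Rightarrow> ('f \<Rightarrow> int) \<Rightarrow> bool" where
  "indexed_group F deg \<longleftrightarrow> group F \<and> deg \<in> hom F integer_group \<and> deg ` carrier F = UNIV"

definition conj_set :: "('g, 'n) monoid_scheme \<Rightarrow> 'g set \<Rightarrow> 'g \<Rightarrow> 'g set" where
  "conj_set G H y = (\<lambda>x. inv\<^bsub>G\<^esub> y \<otimes>\<^bsub>G\<^esub> x \<otimes>\<^bsub>G\<^esub> y) ` H"

definition phi_core :: "('f, 'm) monoid_scheme \<Rightarrow> ('f \<Rightarrow> int) \<Rightarrow> ('g, 'n) monoid_scheme
    \<Rightarrow> 'g set \<Rightarrow> ('f \<Rightarrow> 'g) \<Rightarrow> 'g set" where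
  "phi_core F deg G H \<phi> =
     (\<Inter>f\<in>carrier F. conj_set G H (\<phi> f)) \<inter>
     {x \<in> carrier G. \<forall>f\<in>carrier F. deg f = 0 \<longrightarrow> x \<otimes>\<^bsub>G\<^esub> \<phi> f = \<phi> f \<otimes>\<^bsub>G\<^esub> x}"

definition tail :: "('f, 'm) monoid_scheme \<Rightarrow> ('f \<Rightarrow> int) \<Rightarrow> ('g, 'n) monoid_scheme
    \<Rightarrow> 'g set \<Rightarrow> ('f \<Rightarrow> 'g) \<Rightarrow> ('f \<Rightarrow> 'g) \<times> ('f \<Rightarrow> 'g set)" where
  "tail F deg G H \<phi> =
     (restrict \<phi> {f \<in> carrier F. deg f = 0}, restrict (\<lambda>f. \<phi> f <#\<^bsub>G\<^esub> H) (carrier F))"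

definition similar :: "('f, 'm) monoid_scheme \<Rightarrow> ('f \<Rightarrow> int) \<Rightarrow> ('g, 'n) monoid_scheme
    \<Rightarrow> 'g set \<Rightarrow> ('f \<Rightarrow> 'g) \<Rightarrow> ('f \<Rightarrow> 'g) \<Rightarrow> bool" where
  "similar F deg G H \<phi> \<psi> \<longleftrightarrow>
     (\<exists>h\<in>H. (\<forall>f\<in>carrier F. deg f = 0 \<longrightarrow> \<psi> f = h \<otimes>\<^bsub>G\<^esub> \<phi> f \<otimes>\<^bsub>G\<^esub> inv\<^bsub>G\<^esub> h) \<and>
            (\<forall>f\<in>carrier F. \<psi> f <#\<^bsub>G\<^esub> H = (h \<otimes>\<^bsub>G\<^esub> \<phi> f) <#\<^bsub>G\<^esub> H))"

text \<open>Set of left cosets of K in H (K a subgroup of H); its cardinality is the index |H:K|.\<close>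
definition lcosets_in :: "('g, 'n) monoid_scheme \<Rightarrow> 'g set \<Rightarrow> 'g set \<Rightarrow> 'g set set" where
  "lcosets_in G H K = {h <#\<^bsub>G\<^esub> K | h. h \<in> H}"

end

theory Submission
  imports Defs
begin

text \<open>
  Fix \<open>f\<^sub>1\<close> of degree one.  Every \<open>a \<in> F\<close> is \<open>a\<^sub>0 f\<^sub>1\<^sup>n\<close> with \<open>deg a\<^sub>0 = 0\<close>, so a
  homomorphism \<open>F \<rightarrow> G\<close> is determined by its restriction to \<open>ker deg\<close> and its value at
  \<open>f\<^sub>1\<close>; conversely \<open>\<phi>\<close> can be modified to send \<open>f\<^sub>1\<close> to \<open>\<phi>(f\<^sub>1) k\<close> for any \<open>k\<close>
  centralising \<open>\<phi>(ker deg)\<close>.  The homomorphisms with the same tail as \<open>\<phi>\<close> are exactly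
  these modifications with \<open>k \<in> H\<^sub>\<phi>\<close>, and by (II) they all lie in \<open>\<Phi>\<close>; so every tail
  fibre has \<open>|H\<^sub>\<phi>|\<close> elements.  Conjugation by \<open>H\<close> acts on tails, the tails of the
  similarity class of \<open>\<phi>\<close> form the orbit of the tail of \<open>\<phi>\<close>, and its stabiliser is
  \<open>H\<^sub>\<phi>\<close>.  Orbit--stabiliser and Lagrange, both for cardinalities, give
  \<open>|H : H\<^sub>\<phi>| \<cdot> |H\<^sub>\<phi>| = |H|\<close> elements in the class.
\<close>

lemma eqpoll_image_times_fibres:
  assumes "\<And>b. b \<in> f ` A \<Longrightarrow> {a \<in> A. f a = b} \<approx> K"
  shows "A \<approx> f ` A \<times> K"
proof -
  have "A \<approx> (SIGMA b:f ` A. {a \<in> A. f a = b})"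
    unfolding eqpoll_def by (rule exI[of _ "\<lambda>a. (f a, a)"], rule bij_betw_byWitness[where f' = snd]) auto
  also have "\<dots> \<approx> (SIGMA b:f ` A. K)"
    by (rule Sigma_eqpoll_cong[OF bij_betw_id]) (simp add: assms)
  finally show ?thesis .
qed

lemma image_eqpoll_image_if_same_fibres:
  assumes same: "\<And>a b. a \<in> A \<Longrightarrow> b \<in> A \<Longrightarrow> f a = f b \<longleftrightarrow> g a = g b"
  shows "f ` A \<approx> g ` A"
proof -
  have "g (inv_into A f (f a)) = g a" if "a \<in> A" for a
    using same[of "inv_into A f (f a)" a] that by (simp add: inv_into_into f_inv_into_f)
  then have "bij_betw (\<lambda>x. g (inv_into A f x)) (f ` A) (g ` A)"
    unfolding bij_betw_def inj_on_def using same by (auto simp: image_image)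
  then show ?thesis unfolding eqpoll_def by blast
qed

context group
begin

lemma inv_mult_cancel_left [simp]: "x \<in> carrier G \<Longrightarrow> y \<in> carrier G \<Longrightarrow> inv x \<otimes> (x \<otimes> y) = y"
  by (simp add: m_assoc [symmetric])

lemma mult_inv_cancel_left [simp]: "x \<in> carrier G \<Longrightarrow> y \<in> carrier G \<Longrightarrow> x \<otimes> (inv x \<otimes> y) = y"
  by (simp add: m_assoc [symmetric])

lemma l_coset_eq_iff:
  assumes K: "subgroup K G" and "x \<in> carrier G" "y \<in> carrier G"
  shows "x <# K = y <# K \<longleftrightarrow> inv x \<otimes> y \<in> K"
proof -
  have "x <# K = y <# K \<longleftrightarrow> (rcong K) `` {x} = (rcong K) `` {y}"
    using assms by (simp only: subgroup.l_coset_eq_rcong[OF K is_group])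
  also have "\<dots> \<longleftrightarrow> (x, y) \<in> rcong K"
    using assms eq_equiv_class_iff[OF subgroup.equiv_rcong[OF K is_group]] by blast
  finally show ?thesis using assms by (simp add: r_congruent_def)
qed

lemma commute_inv:
  assumes "x \<in> carrier G" "y \<in> carrier G" "x \<otimes> y = y \<otimes> x"
  shows "inv x \<otimes> y = y \<otimes> inv x"
proof -
  have "inv x \<otimes> y = inv x \<otimes> (y \<otimes> x) \<otimes> inv x"
    using assms by (simp add: m_assoc)
  also have "\<dots> = y \<otimes> inv x"
    using assms by (simp flip: assms(3) add: m_assoc)
  finally show ?thesis .
qed

lemma conj_cancel_iff:
  assumes "h \<in> carrier G" "u \<in> carrier G" "v \<in> carrier G"
  shows "h \<otimes> u \<otimes> inv h = h \<otimes> v \<otimes> inv h \<longleftrightarrow> u = v"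
proof
  assume "h \<otimes> u \<otimes> inv h = h \<otimes> v \<otimes> inv h"
  then have "inv h \<otimes> (h \<otimes> u \<otimes> inv h) \<otimes> h = inv h \<otimes> (h \<otimes> v \<otimes> inv h) \<otimes> h"
    by simp
  then show "u = v"
    using assms by (simp add: m_assoc)
qed simp

lemma conj_commute_iff:
  assumes "h \<in> carrier G" "x \<in> carrier G" "p \<in> carrier G"
  shows "x \<otimes> (h \<otimes> p \<otimes> inv h) = (h \<otimes> p \<otimes> inv h) \<otimes> x \<longleftrightarrow>
    (inv h \<otimes> x \<otimes> h) \<otimes> p = p \<otimes> (inv h \<otimes> x \<otimes> h)"
proof -
  have "x \<otimes> (h \<otimes> p \<otimes> inv h) = h \<otimes> ((inv h \<otimes> x \<otimes> h) \<otimes> p) \<otimes> inv h"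
    "(h \<otimes> p \<otimes> inv h) \<otimes> x = h \<otimes> (p \<otimes> (inv h \<otimes> x \<otimes> h)) \<otimes> inv h"
    using assms by (simp_all add: m_assoc)
  then show ?thesis
    using assms by (simp add: conj_cancel_iff)
qed

lemma conj_mem_subgroup_iff:
  assumes H: "subgroup H G" and h: "h \<in> H" and u: "u \<in> carrier G"
  shows "h \<otimes> u \<otimes> inv h \<in> H \<longleftrightarrow> u \<in> H"
proof -
  note closed = subgroup.m_closed[OF H] and h' = subgroup.m_inv_closed[OF H h]
  show ?thesis
  proof
    assume conj: "h \<otimes> u \<otimes> inv h \<in> H"
    have "inv h \<otimes> (h \<otimes> u \<otimes> inv h) \<otimes> h \<in> H"
      using closed[OF closed[OF h' conj] h] .
    moreover have "inv h \<otimes> (h \<otimes> u \<otimes> inv h) \<otimes> h = u"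
      using subgroup.mem_carrier[OF H h] u by (simp add: m_assoc)
    ultimately show "u \<in> H" by simp
  next
    assume "u \<in> H"
    then show "h \<otimes> u \<otimes> inv h \<in> H"
      using closed[OF closed[OF h] h'] by blast
  qed
qed

lemma mem_conj_set_iff:
  assumes "H \<subseteq> carrier G" "y \<in> carrier G"
  shows "x \<in> conj_set G H y \<longleftrightarrow> x \<in> carrier G \<and> y \<otimes> x \<otimes> inv y \<in> H"
proof
  assume "x \<in> conj_set G H y"
  then show "x \<in> carrier G \<and> y \<otimes> x \<otimes> inv y \<in> H"
    using assms unfolding conj_set_def by (auto simp: m_assoc)
next
  assume x: "x \<in> carrier G \<and> y \<otimes> x \<otimes> inv y \<in> H"
  then have "x = inv y \<otimes> (y \<otimes> x \<otimes> inv y) \<otimes> y"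
    using assms by (simp add: m_assoc)
  then show "x \<in> conj_set G H y"
    using x unfolding conj_set_def by blast
qed

lemma subgroup_eqpoll_cosets_times:
  assumes H: "subgroup H G" and K: "subgroup K G" and "K \<subseteq> H"
  shows "H \<approx> (\<lambda>h. h <# K) ` H \<times> K"
proof (rule eqpoll_image_times_fibres)
  fix b assume "b \<in> (\<lambda>h. h <# K) ` H"
  then obtain h where h: "h \<in> H" "b = h <# K" by blast
  have hG: "h \<in> carrier G" using h subgroup.mem_carrier[OF H] by blast
  have "{x \<in> H. x <# K = b} = h <# K"
  proof (intro equalityI subsetI)
    fix x assume "x \<in> {x \<in> H. x <# K = b}"
    then have "x \<in> carrier G" "inv h \<otimes> x \<in> K"
      using h hG l_coset_eq_iff[OF K, of h x] subgroup.mem_carrier[OF H] by auto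
    then show "x \<in> h <# K"
      using hG unfolding l_coset_def by (auto intro!: bexI[of _ "inv h \<otimes> x"] simp flip: m_assoc)
  next
    fix x assume x: "x \<in> h <# K"
    then obtain u where "u \<in> K" "x = h \<otimes> u" unfolding l_coset_def by blast
    then have "x \<in> H" using h \<open>K \<subseteq> H\<close> subgroup.m_closed[OF H] by blast
    moreover have "x <# K = h <# K"
      using l_repr_independence[OF x hG K] by simp
    ultimately show "x \<in> {x \<in> H. x <# K = b}" using h by simp
  qed
  also have "h <# K = (\<lambda>u. h \<otimes> u) ` K"
    unfolding l_coset_def by blast
  also have "\<dots> \<approx> K"
    by (rule inj_on_image_eqpoll_self) (use hG subgroup.mem_carrier[OF K] in \<open>auto simp: inj_on_def\<close>)
  finally show "{x \<in> H. x <# K = b} \<approx> K" .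
qed

end

locale split_indexed_group = F: group F + G: group G
  for F :: "('f, 'm) monoid_scheme" and G :: "('g, 'n) monoid_scheme" (structure) +
  fixes deg :: "'f \<Rightarrow> int" and f1 :: 'f
  assumes deg_hom: "deg \<in> hom F integer_group"
    and f1_carrier [simp]: "f1 \<in> carrier F" and deg_f1 [simp]: "deg f1 = 1"
begin

lemma deg_mult [simp]: "a \<in> carrier F \<Longrightarrow> b \<in> carrier F \<Longrightarrow> deg (a \<otimes>\<^bsub>F\<^esub> b) = deg a + deg b"
  using deg_hom by (simp add: hom_mult)

lemma deg_group_hom: "group_hom F integer_group deg"
  by (simp add: group_hom_def group_hom_axioms_def F.group_axioms group_integer_group deg_hom)

lemma deg_inv [simp]: "a \<in> carrier F \<Longrightarrow> deg (inv\<^bsub>F\<^esub> a) = - deg a"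
  using group_hom.hom_inv[OF deg_group_hom] by simp

lemma deg_f1_pow [simp]: "deg (f1 [^]\<^bsub>F\<^esub> (n::int)) = n"
  using group_hom.hom_int_pow[OF deg_group_hom f1_carrier] by simp

lemma group_hom_G: "\<chi> \<in> hom F G \<Longrightarrow> group_hom F G \<chi>"
  by (simp add: group_hom_def group_hom_axioms_def F.group_axioms G.group_axioms)

definition deg0_part :: "'f \<Rightarrow> 'f" where
  "deg0_part a = a \<otimes>\<^bsub>F\<^esub> f1 [^]\<^bsub>F\<^esub> (- deg a)"

lemma deg0_part_carrier [simp]: "a \<in> carrier F \<Longrightarrow> deg0_part a \<in> carrier F"
  by (simp add: deg0_part_def)

lemma deg_deg0_part [simp]: "a \<in> carrier F \<Longrightarrow> deg (deg0_part a) = 0"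
  by (simp add: deg0_part_def)

lemma deg0_part_deg0 [simp]: "c \<in> carrier F \<Longrightarrow> deg c = 0 \<Longrightarrow> deg0_part c = c"
  by (simp add: deg0_part_def)

lemma deg0_part_f1 [simp]: "deg0_part f1 = \<one>\<^bsub>F\<^esub>"
  by (simp add: deg0_part_def F.int_pow_neg)

lemma deg0_part_decomp: "a \<in> carrier F \<Longrightarrow> a = deg0_part a \<otimes>\<^bsub>F\<^esub> f1 [^]\<^bsub>F\<^esub> deg a"
  by (simp add: deg0_part_def F.m_assoc F.int_pow_mult [symmetric])

lemma deg0_part_mult:
  assumes "a \<in> carrier F" "b \<in> carrier F"
  shows "deg0_part (a \<otimes>\<^bsub>F\<^esub> b) =
    deg0_part a \<otimes>\<^bsub>F\<^esub> (f1 [^]\<^bsub>F\<^esub> deg a \<otimes>\<^bsub>F\<^esub> deg0_part b \<otimes>\<^bsub>F\<^esub> inv\<^bsub>F\<^esub> (f1 [^]\<^bsub>F\<^esub> deg a))"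
proof -
  have cancel: "f1 [^]\<^bsub>F\<^esub> (- i) \<otimes>\<^bsub>F\<^esub> (f1 [^]\<^bsub>F\<^esub> i \<otimes>\<^bsub>F\<^esub> x) = x" if "x \<in> carrier F" for i :: int and x
    using that by (simp add: F.m_assoc [symmetric] F.int_pow_mult [symmetric])
  have "f1 [^]\<^bsub>F\<^esub> (- deg a - deg b) = f1 [^]\<^bsub>F\<^esub> (- deg b) \<otimes>\<^bsub>F\<^esub> f1 [^]\<^bsub>F\<^esub> (- deg a)"
    by (simp add: F.int_pow_mult [symmetric] algebra_simps)
  then show ?thesis
    using assms by (simp add: deg0_part_def F.m_assoc F.int_pow_neg [symmetric] cancel)
qed

lemma hom_deg0_decomp:
  assumes "\<chi> \<in> hom F G" "a \<in> carrier F"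
  shows "\<chi> a = \<chi> (deg0_part a) \<otimes> \<chi> f1 [^] deg a"
  using assms deg0_part_decomp[of a] hom_mult[of \<chi> F G]
    group_hom.hom_int_pow[OF group_hom_G[OF assms(1)] f1_carrier]
  by (metis F.int_pow_closed deg0_part_carrier f1_carrier)

lemma conj_int_pow_compat:
  fixes n :: int
  assumes \<phi>: "\<phi> \<in> hom F G" and z: "z \<in> carrier G"
    and compat: "\<And>c. c \<in> carrier F \<Longrightarrow> deg c = 0 \<Longrightarrow>
                   z \<otimes> \<phi> c \<otimes> inv z = \<phi> (f1 \<otimes>\<^bsub>F\<^esub> c \<otimes>\<^bsub>F\<^esub> inv\<^bsub>F\<^esub> f1)"
    and c: "c \<in> carrier F" "deg c = 0"
  shows "z [^] n \<otimes> \<phi> c \<otimes> inv (z [^] n) = \<phi> (f1 [^]\<^bsub>F\<^esub> n \<otimes>\<^bsub>F\<^esub> c \<otimes>\<^bsub>F\<^esub> inv\<^bsub>F\<^esub> (f1 [^]\<^bsub>F\<^esub> n))"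
proof -
  have \<phi>G: "\<And>f. f \<in> carrier F \<Longrightarrow> \<phi> f \<in> carrier G"
    using \<phi> by (simp add: hom_in_carrier)
  have nat: "z [^] m \<otimes> \<phi> c \<otimes> inv (z [^] m) = \<phi> (f1 [^]\<^bsub>F\<^esub> m \<otimes>\<^bsub>F\<^esub> c \<otimes>\<^bsub>F\<^esub> inv\<^bsub>F\<^esub> (f1 [^]\<^bsub>F\<^esub> m))"
    if "c \<in> carrier F" "deg c = 0" for m :: nat and c
    using that
  proof (induction m arbitrary: c)
    case 0
    then show ?case using \<phi>G by simp
  next
    case (Suc m)
    let ?c' = "f1 \<otimes>\<^bsub>F\<^esub> c \<otimes>\<^bsub>F\<^esub> inv\<^bsub>F\<^esub> f1"
    have "z [^] Suc m \<otimes> \<phi> c \<otimes> inv (z [^] Suc m) = z [^] m \<otimes> (z \<otimes> \<phi> c \<otimes> inv z) \<otimes> inv (z [^] m)"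
      using Suc.prems z \<phi>G by (simp add: G.nat_pow_Suc G.inv_mult_group G.m_assoc)
    also have "\<dots> = z [^] m \<otimes> \<phi> ?c' \<otimes> inv (z [^] m)"
      using compat Suc.prems by simp
    also have "\<dots> = \<phi> (f1 [^]\<^bsub>F\<^esub> m \<otimes>\<^bsub>F\<^esub> ?c' \<otimes>\<^bsub>F\<^esub> inv\<^bsub>F\<^esub> (f1 [^]\<^bsub>F\<^esub> m))"
      using Suc by simp
    also have "f1 [^]\<^bsub>F\<^esub> m \<otimes>\<^bsub>F\<^esub> ?c' \<otimes>\<^bsub>F\<^esub> inv\<^bsub>F\<^esub> (f1 [^]\<^bsub>F\<^esub> m)
             = f1 [^]\<^bsub>F\<^esub> Suc m \<otimes>\<^bsub>F\<^esub> c \<otimes>\<^bsub>F\<^esub> inv\<^bsub>F\<^esub> (f1 [^]\<^bsub>F\<^esub> Suc m)"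
      using Suc.prems by (simp add: F.nat_pow_Suc F.inv_mult_group F.m_assoc)
    finally show ?case .
  qed
  show ?thesis
  proof (cases n rule: int_cases2)
    case (nonneg m)
    then show ?thesis using nat[OF c] by (simp add: int_pow_int)
  next
    case (nonpos m)
    let ?c'' = "inv\<^bsub>F\<^esub> (f1 [^]\<^bsub>F\<^esub> m) \<otimes>\<^bsub>F\<^esub> c \<otimes>\<^bsub>F\<^esub> f1 [^]\<^bsub>F\<^esub> m"
    have "\<phi> ?c'' = inv (z [^] m) \<otimes> (z [^] m \<otimes> \<phi> ?c'' \<otimes> inv (z [^] m)) \<otimes> z [^] m"
      using z c \<phi>G by (simp add: G.m_assoc)
    also have "z [^] m \<otimes> \<phi> ?c'' \<otimes> inv (z [^] m) = \<phi> c"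
      using nat[of ?c'' m] c by (simp add: F.m_assoc)
    finally have "\<phi> ?c'' = inv (z [^] m) \<otimes> \<phi> c \<otimes> z [^] m" .
    then show ?thesis
      using nonpos z c by (simp add: G.int_pow_neg F.int_pow_neg int_pow_int)
  qed
qed

definition extend_hom :: "('f \<Rightarrow> 'g) \<Rightarrow> 'g \<Rightarrow> 'f \<Rightarrow> 'g" where
  "extend_hom \<phi> z = restrict (\<lambda>a. \<phi> (deg0_part a) \<otimes> z [^] deg a) (carrier F)"

lemma extend_hom_deg0 [simp]:
  "\<phi> \<in> hom F G \<Longrightarrow> c \<in> carrier F \<Longrightarrow> deg c = 0 \<Longrightarrow> extend_hom \<phi> z c = \<phi> c"
  by (simp add: extend_hom_def hom_in_carrier)

lemma extend_hom_f1 [simp]: "\<phi> \<in> hom F G \<Longrightarrow> z \<in> carrier G \<Longrightarrow> extend_hom \<phi> z f1 = z"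
  by (simp add: extend_hom_def hom_one F.group_axioms G.group_axioms)

lemma extend_hom_hom:
  assumes \<phi>: "\<phi> \<in> hom F G" and z: "z \<in> carrier G"
    and compat: "\<And>c. c \<in> carrier F \<Longrightarrow> deg c = 0 \<Longrightarrow>
                   z \<otimes> \<phi> c \<otimes> inv z = \<phi> (f1 \<otimes>\<^bsub>F\<^esub> c \<otimes>\<^bsub>F\<^esub> inv\<^bsub>F\<^esub> f1)"
  shows "extend_hom \<phi> z \<in> hom F G"
proof (rule homI)
  have \<phi>G: "\<And>f. f \<in> carrier F \<Longrightarrow> \<phi> f \<in> carrier G"
    using \<phi> by (simp add: hom_in_carrier)
  fix a assume a: "a \<in> carrier F"
  then show "extend_hom \<phi> z a \<in> carrier G"
    using z \<phi>G by (simp add: extend_hom_def)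
  fix b assume b: "b \<in> carrier F"
  let ?n = "deg a" and ?m = "deg b"
  let ?b' = "f1 [^]\<^bsub>F\<^esub> ?n \<otimes>\<^bsub>F\<^esub> deg0_part b \<otimes>\<^bsub>F\<^esub> inv\<^bsub>F\<^esub> (f1 [^]\<^bsub>F\<^esub> ?n)"
  have "extend_hom \<phi> z (a \<otimes>\<^bsub>F\<^esub> b) = \<phi> (deg0_part a) \<otimes> \<phi> ?b' \<otimes> (z [^] ?n \<otimes> z [^] ?m)"
    using a b z by (simp add: extend_hom_def deg0_part_mult hom_mult[OF \<phi>] G.int_pow_mult)
  also have "\<phi> ?b' = z [^] ?n \<otimes> \<phi> (deg0_part b) \<otimes> inv (z [^] ?n)"
    using conj_int_pow_compat[of \<phi> z, OF \<phi> z compat] b by simp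
  also have "\<phi> (deg0_part a) \<otimes> (z [^] ?n \<otimes> \<phi> (deg0_part b) \<otimes> inv (z [^] ?n)) \<otimes> (z [^] ?n \<otimes> z [^] ?m)
      = (\<phi> (deg0_part a) \<otimes> z [^] ?n) \<otimes> (\<phi> (deg0_part b) \<otimes> z [^] ?m)"
    using a b z \<phi>G by (simp add: G.m_assoc)
  also have "\<dots> = extend_hom \<phi> z a \<otimes> extend_hom \<phi> z b"
    using a b by (simp add: extend_hom_def)
  finally show "extend_hom \<phi> z (a \<otimes>\<^bsub>F\<^esub> b) = extend_hom \<phi> z a \<otimes> extend_hom \<phi> z b" .
qed

lemma eq_extend_hom:
  assumes \<chi>: "\<chi> \<in> hom F G" "\<chi> \<in> extensional (carrier F)"
    and agree: "\<And>c. c \<in> carrier F \<Longrightarrow> deg c = 0 \<Longrightarrow> \<chi> c = \<phi> c"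
  shows "\<chi> = extend_hom \<phi> (\<chi> f1)"
proof (rule extensionalityI[OF \<chi>(2)])
  show "extend_hom \<phi> (\<chi> f1) \<in> extensional (carrier F)"
    by (simp add: extend_hom_def)
  fix a assume a: "a \<in> carrier F"
  then show "\<chi> a = extend_hom \<phi> (\<chi> f1) a"
    using hom_deg0_decomp[OF \<chi>(1) a] agree[of "deg0_part a"] by (simp add: extend_hom_def)
qed

lemma extend_hom_twist_hom:
  assumes \<phi>: "\<phi> \<in> hom F G" and k: "k \<in> carrier G"
    and commute: "\<And>c. c \<in> carrier F \<Longrightarrow> deg c = 0 \<Longrightarrow> k \<otimes> \<phi> c = \<phi> c \<otimes> k"
  shows "extend_hom \<phi> (\<phi> f1 \<otimes> k) \<in> hom F G"
proof (rule extend_hom_hom[OF \<phi>])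
  have \<phi>G: "\<And>f. f \<in> carrier F \<Longrightarrow> \<phi> f \<in> carrier G"
    using \<phi> by (simp add: hom_in_carrier)
  show "\<phi> f1 \<otimes> k \<in> carrier G" using k \<phi>G by simp
  fix c assume c: "c \<in> carrier F" "deg c = 0"
  have "\<phi> f1 \<otimes> k \<otimes> \<phi> c \<otimes> inv (\<phi> f1 \<otimes> k) = \<phi> f1 \<otimes> (k \<otimes> \<phi> c) \<otimes> inv k \<otimes> inv (\<phi> f1)"
    using c k \<phi>G by (simp add: G.inv_mult_group G.m_assoc)
  also have "\<dots> = \<phi> f1 \<otimes> \<phi> c \<otimes> inv (\<phi> f1)"
    using c k \<phi>G by (simp add: commute G.m_assoc)
  also have "\<dots> = \<phi> (f1 \<otimes>\<^bsub>F\<^esub> c \<otimes>\<^bsub>F\<^esub> inv\<^bsub>F\<^esub> f1)"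
    using c \<phi> by (simp add: hom_mult group_hom.hom_inv[OF group_hom_G])
  finally show "\<phi> f1 \<otimes> k \<otimes> \<phi> c \<otimes> inv (\<phi> f1 \<otimes> k) = \<phi> (f1 \<otimes>\<^bsub>F\<^esub> c \<otimes>\<^bsub>F\<^esub> inv\<^bsub>F\<^esub> f1)" .
qed

end

locale similarity_setting = split_indexed_group F G deg f1
  for F :: "('f, 'm) monoid_scheme" and G :: "('g, 'n) monoid_scheme" (structure)
    and deg :: "'f \<Rightarrow> int" and f1 :: 'f +
  fixes H :: "'g set"
  assumes subgroup_H: "subgroup H G"
begin

abbreviation core :: "('f \<Rightarrow> 'g) \<Rightarrow> 'g set" where
  "core \<phi> \<equiv> phi_core F deg G H \<phi>"

abbreviation tail_H :: "('f \<Rightarrow> 'g) \<Rightarrow> ('f \<Rightarrow> 'g) \<times> ('f \<Rightarrow> 'g set)" where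
  "tail_H \<phi> \<equiv> tail F deg G H \<phi>"

definition conj_hom :: "'g \<Rightarrow> ('f \<Rightarrow> 'g) \<Rightarrow> 'f \<Rightarrow> 'g" where
  "conj_hom h \<phi> = restrict (\<lambda>f. h \<otimes> \<phi> f \<otimes> inv h) (carrier F)"

lemma H_carrier: "h \<in> H \<Longrightarrow> h \<in> carrier G"
  using subgroup.mem_carrier[OF subgroup_H] .

lemma mem_core_iff:
  assumes \<phi>: "\<phi> \<in> hom F G"
  shows "x \<in> core \<phi> \<longleftrightarrow> x \<in> carrier G \<and> (\<forall>f\<in>carrier F. inv (\<phi> f) \<otimes> x \<otimes> \<phi> f \<in> H)
           \<and> (\<forall>c\<in>carrier F. deg c = 0 \<longrightarrow> x \<otimes> \<phi> c = \<phi> c \<otimes> x)"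
proof -
  have \<phi>G: "\<And>f. f \<in> carrier F \<Longrightarrow> \<phi> f \<in> carrier G"
    using \<phi> by (simp add: hom_in_carrier)
  have \<phi>_inv: "\<And>f. f \<in> carrier F \<Longrightarrow> \<phi> (inv\<^bsub>F\<^esub> f) = inv (\<phi> f)"
    using group_hom.hom_inv[OF group_hom_G[OF \<phi>]] .
  have swap: "inv (\<phi> f) \<otimes> x \<otimes> \<phi> f = \<phi> (inv\<^bsub>F\<^esub> f) \<otimes> x \<otimes> inv (\<phi> (inv\<^bsub>F\<^esub> f))"
    "\<phi> f \<otimes> x \<otimes> inv (\<phi> f) = inv (\<phi> (inv\<^bsub>F\<^esub> f)) \<otimes> x \<otimes> \<phi> (inv\<^bsub>F\<^esub> f)"
    if "f \<in> carrier F" for f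
    using that \<phi>G by (simp_all add: \<phi>_inv)
  have conj_sets: "(\<forall>f\<in>carrier F. x \<in> conj_set G H (\<phi> f)) \<longleftrightarrow>
        x \<in> carrier G \<and> (\<forall>f\<in>carrier F. \<phi> f \<otimes> x \<otimes> inv (\<phi> f) \<in> H)"
    using F.one_closed by (auto simp: G.mem_conj_set_iff[OF subgroup.subset[OF subgroup_H]] \<phi>G)
  have conjugates: "(\<forall>f\<in>carrier F. \<phi> f \<otimes> x \<otimes> inv (\<phi> f) \<in> H) \<longleftrightarrow>
        (\<forall>f\<in>carrier F. inv (\<phi> f) \<otimes> x \<otimes> \<phi> f \<in> H)"
    using swap F.inv_closed by (smt (verit))
  have "x \<in> core \<phi> \<longleftrightarrow> (\<forall>f\<in>carrier F. x \<in> conj_set G H (\<phi> f)) \<and> x \<in> carrier G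
          \<and> (\<forall>c\<in>carrier F. deg c = 0 \<longrightarrow> x \<otimes> \<phi> c = \<phi> c \<otimes> x)"
    unfolding phi_core_def by auto
  then show ?thesis
    using conj_sets conjugates by argo
qed

lemma core_subset_H:
  assumes \<phi>: "\<phi> \<in> hom F G"
  shows "core \<phi> \<subseteq> H"
proof
  fix x assume "x \<in> core \<phi>"
  then have "inv (\<phi> \<one>\<^bsub>F\<^esub>) \<otimes> x \<otimes> \<phi> \<one>\<^bsub>F\<^esub> \<in> H" "x \<in> carrier G"
    using mem_core_iff[OF \<phi>] F.one_closed by blast+
  then show "x \<in> H"
    using \<phi> by (simp add: hom_one F.group_axioms G.group_axioms)
qed

lemma core_subgroup:
  assumes \<phi>: "\<phi> \<in> hom F G"
  shows "subgroup (core \<phi>) G"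
proof (rule G.subgroupI)
  have \<phi>G: "\<And>f. f \<in> carrier F \<Longrightarrow> \<phi> f \<in> carrier G"
    using \<phi> by (simp add: hom_in_carrier)
  note core = mem_core_iff[OF \<phi>]
  note H = subgroup_H
  show "core \<phi> \<subseteq> carrier G" using core by blast
  show "core \<phi> \<noteq> {}"
    using core[of \<one>] \<phi>G subgroup.one_closed[OF H] by auto
  fix a assume a: "a \<in> core \<phi>"
  then have aG: "a \<in> carrier G" using core by blast
  show "inv a \<in> core \<phi>"
    unfolding core
  proof (intro conjI ballI impI)
    fix f assume f: "f \<in> carrier F"
    have "inv (\<phi> f) \<otimes> inv a \<otimes> \<phi> f = inv (inv (\<phi> f) \<otimes> a \<otimes> \<phi> f)"
      using aG \<phi>G[OF f] by (simp add: G.inv_mult_group G.m_assoc)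
    then show "inv (\<phi> f) \<otimes> inv a \<otimes> \<phi> f \<in> H"
      using a f core subgroup.m_inv_closed[OF H] by auto
  next
    fix c assume "c \<in> carrier F" "deg c = 0"
    then show "inv a \<otimes> \<phi> c = \<phi> c \<otimes> inv a"
      using a core aG \<phi>G G.commute_inv by auto
  qed (use aG in simp)
  fix b assume b: "b \<in> core \<phi>"
  then have bG: "b \<in> carrier G" using core by blast
  show "a \<otimes> b \<in> core \<phi>"
    unfolding core
  proof (intro conjI ballI impI)
    fix f assume f: "f \<in> carrier F"
    have "inv (\<phi> f) \<otimes> (a \<otimes> b) \<otimes> \<phi> f = (inv (\<phi> f) \<otimes> a \<otimes> \<phi> f) \<otimes> (inv (\<phi> f) \<otimes> b \<otimes> \<phi> f)"
      using aG bG \<phi>G[OF f] by (simp add: G.m_assoc)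
    then show "inv (\<phi> f) \<otimes> (a \<otimes> b) \<otimes> \<phi> f \<in> H"
      using a b f core subgroup.m_closed[OF H] by auto
  next
    fix c assume "c \<in> carrier F" "deg c = 0"
    then show "a \<otimes> b \<otimes> \<phi> c = \<phi> c \<otimes> (a \<otimes> b)"
      using a b core aG bG \<phi>G by (metis G.m_assoc)
  qed (use aG bG in simp)
qed

text \<open>The centraliser part is preserved because \<open>ker deg\<close> is normal in \<open>F\<close>.\<close>

lemma core_conj_closed:
  assumes \<phi>: "\<phi> \<in> hom F G" and x: "x \<in> core \<phi>" and f: "f \<in> carrier F"
  shows "inv (\<phi> f) \<otimes> x \<otimes> \<phi> f \<in> core \<phi>"
proof -
  have \<phi>G: "\<And>f. f \<in> carrier F \<Longrightarrow> \<phi> f \<in> carrier G"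
    using \<phi> by (simp add: hom_in_carrier)
  note core = mem_core_iff[OF \<phi>]
  have xG: "x \<in> carrier G" using x core by blast
  show ?thesis
    unfolding core
  proof (intro conjI ballI impI)
    fix g assume g: "g \<in> carrier F"
    have "inv (\<phi> g) \<otimes> (inv (\<phi> f) \<otimes> x \<otimes> \<phi> f) \<otimes> \<phi> g = inv (\<phi> (f \<otimes>\<^bsub>F\<^esub> g)) \<otimes> x \<otimes> \<phi> (f \<otimes>\<^bsub>F\<^esub> g)"
      using f g xG \<phi>G by (simp add: hom_mult[OF \<phi>] G.inv_mult_group G.m_assoc)
    then show "inv (\<phi> g) \<otimes> (inv (\<phi> f) \<otimes> x \<otimes> \<phi> f) \<otimes> \<phi> g \<in> H"
      using x f g core by simp
  next
    fix c assume c: "c \<in> carrier F" "deg c = 0"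
    let ?c' = "f \<otimes>\<^bsub>F\<^esub> c \<otimes>\<^bsub>F\<^esub> inv\<^bsub>F\<^esub> f"
    have "\<phi> ?c' = \<phi> f \<otimes> \<phi> c \<otimes> inv (\<phi> f)"
      using f c \<phi> by (simp add: hom_mult group_hom.hom_inv[OF group_hom_G])
    moreover have "x \<otimes> \<phi> ?c' = \<phi> ?c' \<otimes> x"
      using x c f core by simp
    ultimately have commute: "x \<otimes> (\<phi> f \<otimes> \<phi> c \<otimes> inv (\<phi> f)) = (\<phi> f \<otimes> \<phi> c \<otimes> inv (\<phi> f)) \<otimes> x"
      by simp
    have "inv (\<phi> f) \<otimes> x \<otimes> \<phi> f \<otimes> \<phi> c = inv (\<phi> f) \<otimes> (x \<otimes> (\<phi> f \<otimes> \<phi> c \<otimes> inv (\<phi> f))) \<otimes> \<phi> f"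
      using f c xG \<phi>G by (simp add: G.m_assoc)
    also have "\<dots> = \<phi> c \<otimes> (inv (\<phi> f) \<otimes> x \<otimes> \<phi> f)"
      unfolding commute using f c xG \<phi>G by (simp add: G.m_assoc)
    finally show "inv (\<phi> f) \<otimes> x \<otimes> \<phi> f \<otimes> \<phi> c = \<phi> c \<otimes> (inv (\<phi> f) \<otimes> x \<otimes> \<phi> f)" .
  qed (use xG f \<phi>G in simp)
qed

lemma tail_eq_iff:
  "tail_H \<chi> = tail_H \<psi> \<longleftrightarrow>
     (\<forall>c\<in>carrier F. deg c = 0 \<longrightarrow> \<chi> c = \<psi> c) \<and> (\<forall>f\<in>carrier F. \<chi> f <# H = \<psi> f <# H)"
  unfolding tail_def by (auto simp: fun_eq_iff)

lemma l_coset_H_eq_iff: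
  "x \<in> carrier G \<Longrightarrow> y \<in> carrier G \<Longrightarrow> x <# H = y <# H \<longleftrightarrow> inv x \<otimes> y \<in> H"
  using G.l_coset_eq_iff[OF subgroup_H] .

lemma l_coset_H_eq_iff':
  "x \<in> carrier G \<Longrightarrow> y \<in> carrier G \<Longrightarrow> x <# H = y <# H \<longleftrightarrow> inv y \<otimes> x \<in> H"
  by (metis l_coset_H_eq_iff)

lemma l_coset_H_absorb: "x \<in> carrier G \<Longrightarrow> u \<in> H \<Longrightarrow> (x \<otimes> u) <# H = x <# H"
  using H_carrier subgroup.m_inv_closed[OF subgroup_H]
  by (simp add: l_coset_H_eq_iff G.inv_mult_group G.m_assoc)

lemma conj_hom_hom:
  assumes \<phi>: "\<phi> \<in> hom F G" and h: "h \<in> carrier G"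
  shows "conj_hom h \<phi> \<in> hom F G"
  using h hom_in_carrier[OF \<phi>] hom_mult[OF \<phi>]
  by (intro homI) (auto simp: conj_hom_def G.m_assoc)

lemma conj_hom_conj_hom:
  assumes "\<phi> \<in> hom F G" "a \<in> carrier G" "b \<in> carrier G"
  shows "conj_hom a (conj_hom b \<phi>) = conj_hom (a \<otimes> b) \<phi>"
  unfolding conj_hom_def using assms hom_in_carrier[OF assms(1)]
  by (intro restrict_ext) (simp add: G.inv_mult_group G.m_assoc)

lemma tail_conj_hom_one: "\<phi> \<in> hom F G \<Longrightarrow> tail_H (conj_hom \<one> \<phi>) = tail_H \<phi>"
  by (simp add: tail_eq_iff conj_hom_def hom_in_carrier)

lemma tail_conj_hom_cancel:
  assumes \<chi>: "\<chi> \<in> hom F G" and \<psi>: "\<psi> \<in> hom F G" and a: "a \<in> H"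
  shows "tail_H (conj_hom a \<chi>) = tail_H (conj_hom a \<psi>) \<longleftrightarrow> tail_H \<chi> = tail_H \<psi>"
proof -
  have aG: "a \<in> carrier G" using H_carrier[OF a] .
  have cosets: "(a \<otimes> \<chi> f \<otimes> inv a) <# H = (a \<otimes> \<psi> f \<otimes> inv a) <# H \<longleftrightarrow> \<chi> f <# H = \<psi> f <# H"
    if f: "f \<in> carrier F" for f
  proof -
    have \<chi>\<psi>: "\<chi> f \<in> carrier G" "\<psi> f \<in> carrier G"
      using f \<chi> \<psi> by (simp_all add: hom_in_carrier)
    then have "(a \<otimes> \<chi> f \<otimes> inv a) <# H = (a \<otimes> \<psi> f \<otimes> inv a) <# H \<longleftrightarrow> (a \<otimes> \<chi> f) <# H = (a \<otimes> \<psi> f) <# H"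
      using aG a subgroup.m_inv_closed[OF subgroup_H] by (simp add: l_coset_H_absorb)
    also have "\<dots> \<longleftrightarrow> \<chi> f <# H = \<psi> f <# H"
      using \<chi>\<psi> aG by (simp add: l_coset_H_eq_iff G.inv_mult_group G.m_assoc)
    finally show ?thesis .
  qed
  have conj_values: "conj_hom a \<chi> c = conj_hom a \<psi> c \<longleftrightarrow> \<chi> c = \<psi> c" if "c \<in> carrier F" for c
    using that aG hom_in_carrier[OF \<chi>] hom_in_carrier[OF \<psi>]
    by (simp add: conj_hom_def G.conj_cancel_iff)
  show ?thesis
    unfolding tail_eq_iff using conj_values cosets by (simp add: conj_hom_def)
qed

lemma tail_conj_hom_eq_iff:
  assumes \<phi>: "\<phi> \<in> hom F G" and g: "g \<in> H"
  shows "tail_H (conj_hom g \<phi>) = tail_H \<phi> \<longleftrightarrow> g \<in> core \<phi>"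
proof -
  have gG: "g \<in> carrier G" using H_carrier[OF g] .
  have \<phi>G: "\<And>f. f \<in> carrier F \<Longrightarrow> \<phi> f \<in> carrier G"
    using \<phi> by (simp add: hom_in_carrier)
  have conj_values: "conj_hom g \<phi> c = \<phi> c \<longleftrightarrow> g \<otimes> \<phi> c = \<phi> c \<otimes> g" if "c \<in> carrier F" for c
    using that gG \<phi>G by (simp add: conj_hom_def G.inv_solve_right')
  have cosets: "conj_hom g \<phi> f <# H = \<phi> f <# H \<longleftrightarrow> inv (\<phi> f) \<otimes> g \<otimes> \<phi> f \<in> H"
    if f: "f \<in> carrier F" for f
  proof -
    have "conj_hom g \<phi> f <# H = (g \<otimes> \<phi> f) <# H"
      using f gG \<phi>G subgroup.m_inv_closed[OF subgroup_H g] by (simp add: conj_hom_def l_coset_H_absorb)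
    moreover have "(g \<otimes> \<phi> f) <# H = \<phi> f <# H \<longleftrightarrow> inv (\<phi> f) \<otimes> g \<otimes> \<phi> f \<in> H"
      using l_coset_H_eq_iff[of "\<phi> f" "g \<otimes> \<phi> f"] f gG \<phi>G by (auto simp: G.m_assoc)
    ultimately show ?thesis by simp
  qed
  show ?thesis
    unfolding tail_eq_iff mem_core_iff[OF \<phi>] using conj_values cosets gG by auto
qed

lemma tail_conj_hom_eq_iff_cosets:
  assumes \<phi>: "\<phi> \<in> hom F G" and a: "a \<in> H" and b: "b \<in> H"
  shows "tail_H (conj_hom a \<phi>) = tail_H (conj_hom b \<phi>) \<longleftrightarrow> a <# core \<phi> = b <# core \<phi>"
proof -
  have aG: "a \<in> carrier G" and bG: "b \<in> carrier G" using a b H_carrier by auto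
  have a': "inv a \<in> H" using subgroup.m_inv_closed[OF subgroup_H a] .
  have "tail_H (conj_hom a \<phi>) = tail_H (conj_hom b \<phi>) \<longleftrightarrow>
      tail_H (conj_hom (inv a) (conj_hom a \<phi>)) = tail_H (conj_hom (inv a) (conj_hom b \<phi>))"
    using tail_conj_hom_cancel[OF conj_hom_hom[OF \<phi> aG] conj_hom_hom[OF \<phi> bG] a'] by simp
  also have "\<dots> \<longleftrightarrow> tail_H (conj_hom (inv a \<otimes> b) \<phi>) = tail_H \<phi>"
    using \<phi> aG bG by (auto simp: conj_hom_conj_hom tail_conj_hom_one)
  also have "\<dots> \<longleftrightarrow> inv a \<otimes> b \<in> core \<phi>"
    using a' b subgroup.m_closed[OF subgroup_H] by (simp add: tail_conj_hom_eq_iff[OF \<phi>])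
  also have "\<dots> \<longleftrightarrow> a <# core \<phi> = b <# core \<phi>"
    using G.l_coset_eq_iff[OF core_subgroup[OF \<phi>] aG bG] by simp
  finally show ?thesis .
qed

lemma similar_iff_tail_conj_hom:
  assumes \<phi>: "\<phi> \<in> hom F G"
  shows "similar F deg G H \<phi> \<psi> \<longleftrightarrow> (\<exists>h\<in>H. tail_H \<psi> = tail_H (conj_hom h \<phi>))"
proof -
  have "(h \<otimes> \<phi> f \<otimes> inv h) <# H = (h \<otimes> \<phi> f) <# H" if "h \<in> H" "f \<in> carrier F" for h f
    using that H_carrier hom_in_carrier[OF \<phi>] subgroup.m_inv_closed[OF subgroup_H]
    by (simp add: l_coset_H_absorb)
  then show ?thesis
    unfolding similar_def tail_eq_iff conj_hom_def by simp
qed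

lemma mem_core_conj_hom_iff:
  assumes \<phi>: "\<phi> \<in> hom F G" and h: "h \<in> H"
  shows "x \<in> core (conj_hom h \<phi>) \<longleftrightarrow> x \<in> carrier G \<and> inv h \<otimes> x \<otimes> h \<in> core \<phi>"
proof (cases "x \<in> carrier G")
  case False
  then show ?thesis using mem_core_iff[OF conj_hom_hom[OF \<phi> H_carrier[OF h]]] by blast
next
  case xG: True
  have hG: "h \<in> carrier G" using H_carrier[OF h] .
  have \<phi>G: "\<And>f. f \<in> carrier F \<Longrightarrow> \<phi> f \<in> carrier G"
    using \<phi> by (simp add: hom_in_carrier)
  let ?y = "inv h \<otimes> x \<otimes> h"
  have conjugates: "inv (conj_hom h \<phi> f) \<otimes> x \<otimes> conj_hom h \<phi> f \<in> H \<longleftrightarrow> inv (\<phi> f) \<otimes> ?y \<otimes> \<phi> f \<in> H"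
    if f: "f \<in> carrier F" for f
  proof -
    have "inv (conj_hom h \<phi> f) \<otimes> x \<otimes> conj_hom h \<phi> f = h \<otimes> (inv (\<phi> f) \<otimes> ?y \<otimes> \<phi> f) \<otimes> inv h"
      using f xG hG \<phi>G by (simp add: conj_hom_def G.inv_mult_group G.m_assoc)
    then show ?thesis
      using G.conj_mem_subgroup_iff[OF subgroup_H h] f xG hG \<phi>G by simp
  qed
  have commute: "x \<otimes> conj_hom h \<phi> c = conj_hom h \<phi> c \<otimes> x \<longleftrightarrow> ?y \<otimes> \<phi> c = \<phi> c \<otimes> ?y"
    if c: "c \<in> carrier F" for c
    using G.conj_commute_iff[OF hG xG \<phi>G[OF c]] c by (simp add: conj_hom_def)
  show ?thesis
    unfolding mem_core_iff[OF conj_hom_hom[OF \<phi> hG]] mem_core_iff[OF \<phi>]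
    using conjugates commute xG hG by simp
qed

lemma core_conj_hom_eqpoll:
  assumes \<phi>: "\<phi> \<in> hom F G" and h: "h \<in> H"
  shows "core (conj_hom h \<phi>) \<approx> core \<phi>"
proof -
  have hG: "h \<in> carrier G" using H_carrier[OF h] .
  note core = mem_core_conj_hom_iff[OF \<phi> h]
  have coreG: "y \<in> carrier G" if "y \<in> core \<phi>" for y
    using that mem_core_iff[OF \<phi>] by blast
  have "bij_betw (\<lambda>x. inv h \<otimes> x \<otimes> h) (core (conj_hom h \<phi>)) (core \<phi>)"
  proof (rule bij_betw_byWitness[where f' = "\<lambda>y. h \<otimes> y \<otimes> inv h"])
    show "\<forall>x\<in>core (conj_hom h \<phi>). h \<otimes> (inv h \<otimes> x \<otimes> h) \<otimes> inv h = x"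
      using core hG by (simp add: G.m_assoc)
    show "\<forall>y\<in>core \<phi>. inv h \<otimes> (h \<otimes> y \<otimes> inv h) \<otimes> h = y"
      using coreG hG by (simp add: G.m_assoc)
    show "(\<lambda>x. inv h \<otimes> x \<otimes> h) ` core (conj_hom h \<phi>) \<subseteq> core \<phi>"
      using core by blast
    show "(\<lambda>y. h \<otimes> y \<otimes> inv h) ` core \<phi> \<subseteq> core (conj_hom h \<phi>)"
      using core coreG hG by (auto simp: G.m_assoc)
  qed
  then show ?thesis unfolding eqpoll_def by blast
qed

lemma same_tail_imp_mem_core:
  assumes \<chi>: "\<chi> \<in> hom F G" and \<phi>: "\<phi> \<in> hom F G" and same: "tail_H \<chi> = tail_H \<phi>"
  shows "inv (\<phi> f1) \<otimes> \<chi> f1 \<in> core \<phi>"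
proof -
  have \<phi>G: "\<And>f. f \<in> carrier F \<Longrightarrow> \<phi> f \<in> carrier G"
    using \<phi> by (simp add: hom_in_carrier)
  have \<chi>G: "\<And>f. f \<in> carrier F \<Longrightarrow> \<chi> f \<in> carrier G"
    using \<chi> by (simp add: hom_in_carrier)
  have deg0: "\<And>c. c \<in> carrier F \<Longrightarrow> deg c = 0 \<Longrightarrow> \<chi> c = \<phi> c"
    and cosets: "\<And>f. f \<in> carrier F \<Longrightarrow> inv (\<phi> f) \<otimes> \<chi> f \<in> H"
    using same \<phi>G \<chi>G by (auto simp: tail_eq_iff l_coset_H_eq_iff')
  let ?y = "\<phi> f1" and ?k = "inv (\<phi> f1) \<otimes> \<chi> f1"
  have yG: "?y \<in> carrier G" and kG: "?k \<in> carrier G" using \<phi>G \<chi>G by simp_all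
  have \<chi>f1: "\<chi> f1 = ?y \<otimes> ?k" using \<phi>G \<chi>G by simp
  show ?thesis
    unfolding mem_core_iff[OF \<phi>]
  proof (intro conjI ballI impI kG)
    fix f assume f: "f \<in> carrier F"
    have "inv (\<phi> f) \<otimes> ?k \<otimes> \<phi> f =
        (inv (\<phi> (f1 \<otimes>\<^bsub>F\<^esub> f)) \<otimes> \<chi> (f1 \<otimes>\<^bsub>F\<^esub> f)) \<otimes> inv (inv (\<phi> f) \<otimes> \<chi> f)"
      using f \<phi>G \<chi>G by (simp add: hom_mult[OF \<phi>] hom_mult[OF \<chi>] G.inv_mult_group G.m_assoc)
    then show "inv (\<phi> f) \<otimes> ?k \<otimes> \<phi> f \<in> H"
      using f cosets subgroup.m_closed[OF subgroup_H] subgroup.m_inv_closed[OF subgroup_H] by simp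
  next
    fix c assume c: "c \<in> carrier F" "deg c = 0"
    let ?c' = "f1 \<otimes>\<^bsub>F\<^esub> c \<otimes>\<^bsub>F\<^esub> inv\<^bsub>F\<^esub> f1"
    have "?y \<otimes> (?k \<otimes> \<phi> c \<otimes> inv ?k) \<otimes> inv ?y = \<chi> ?c'"
      using c \<chi>f1 \<phi>G \<chi>G \<chi> deg0
      by (simp add: hom_mult group_hom.hom_inv[OF group_hom_G] G.inv_mult_group G.m_assoc)
    also have "\<chi> ?c' = \<phi> ?c'"
      using c by (simp add: deg0)
    also have "\<phi> ?c' = ?y \<otimes> \<phi> c \<otimes> inv ?y"
      using c \<phi> by (simp add: hom_mult group_hom.hom_inv[OF group_hom_G])
    finally have "?k \<otimes> \<phi> c \<otimes> inv ?k = \<phi> c"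
      using c yG kG \<phi>G by (simp add: G.conj_cancel_iff)
    then show "?k \<otimes> \<phi> c = \<phi> c \<otimes> ?k"
      using c kG \<phi>G by (simp add: G.inv_solve_right')
  qed
qed

lemma f1_conj_closed_core:
  assumes \<phi>: "\<phi> \<in> hom F G" and x: "x \<in> core \<phi>"
  shows "inv (\<phi> f1) \<otimes> x \<otimes> \<phi> f1 \<in> core \<phi>" and "\<phi> f1 \<otimes> x \<otimes> inv (\<phi> f1) \<in> core \<phi>"
proof -
  show "inv (\<phi> f1) \<otimes> x \<otimes> \<phi> f1 \<in> core \<phi>"
    using core_conj_closed[OF \<phi> x f1_carrier] .
  have "\<phi> (inv\<^bsub>F\<^esub> f1) = inv (\<phi> f1)"
    using group_hom.hom_inv[OF group_hom_G[OF \<phi>] f1_carrier] .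
  then show "\<phi> f1 \<otimes> x \<otimes> inv (\<phi> f1) \<in> core \<phi>"
    using core_conj_closed[OF \<phi> x F.inv_closed[OF f1_carrier]] hom_in_carrier[OF \<phi> f1_carrier] by simp
qed

lemma twist_pow_mem_core:
  fixes n :: int
  assumes \<phi>: "\<phi> \<in> hom F G" and k: "k \<in> core \<phi>"
  shows "inv (\<phi> f1 [^] n) \<otimes> (\<phi> f1 \<otimes> k) [^] n \<in> core \<phi>"
proof -
  let ?y = "\<phi> f1"
  let ?w = "\<lambda>i::int. inv (?y [^] i) \<otimes> (?y \<otimes> k) [^] i"
  have yG: "?y \<in> carrier G" using \<phi> by (simp add: hom_in_carrier)
  have kG: "k \<in> carrier G" using k mem_core_iff[OF \<phi>] by blast
  note closed = subgroup.m_closed[OF core_subgroup[OF \<phi>]]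
  show ?thesis
  proof (induction n rule: int_induct[where k = 0])
    case base
    then show ?case using subgroup.one_closed[OF core_subgroup[OF \<phi>]] by simp
  next
    case (step1 i)
    have "?w (i + 1) = (inv ?y \<otimes> ?w i \<otimes> ?y) \<otimes> k"
      using yG kG by (simp add: G.int_pow_mult G.inv_mult_group G.m_assoc)
    then show ?case
      using closed[OF f1_conj_closed_core(1)[OF \<phi> step1.IH] k] by simp
  next
    case (step2 i)
    have kinv: "inv k \<in> core \<phi>" using subgroup.m_inv_closed[OF core_subgroup[OF \<phi>] k] .
    have "?w (i - 1) = ?y \<otimes> (?w i \<otimes> inv k) \<otimes> inv ?y"
      using yG kG by (simp add: G.int_pow_diff G.inv_mult_group G.m_assoc)
    then show ?case
      using f1_conj_closed_core(2)[OF \<phi> closed[OF step2.IH kinv]] by simp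
  qed
qed

lemma tail_extend_hom_twist:
  assumes \<phi>: "\<phi> \<in> hom F G" and k: "k \<in> core \<phi>"
  shows "tail_H (extend_hom \<phi> (\<phi> f1 \<otimes> k)) = tail_H \<phi>"
proof -
  have \<phi>G: "\<And>f. f \<in> carrier F \<Longrightarrow> \<phi> f \<in> carrier G"
    using \<phi> by (simp add: hom_in_carrier)
  have kG: "k \<in> carrier G" using k mem_core_iff[OF \<phi>] by blast
  let ?y = "\<phi> f1" and ?\<chi> = "extend_hom \<phi> (\<phi> f1 \<otimes> k)"
  have "?\<chi> a <# H = \<phi> a <# H" if a: "a \<in> carrier F" for a
  proof -
    have \<chi>G: "?\<chi> a \<in> carrier G" using a kG \<phi>G by (simp add: extend_hom_def)
    have "inv (\<phi> a) \<otimes> ?\<chi> a = inv (?y [^] deg a) \<otimes> (?y \<otimes> k) [^] deg a"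
      using a kG \<phi>G hom_deg0_decomp[OF \<phi> a]
      by (simp add: extend_hom_def G.inv_mult_group G.m_assoc)
    also have "\<dots> \<in> H"
      using twist_pow_mem_core[OF \<phi> k] core_subset_H[OF \<phi>] by blast
    finally show ?thesis
      using l_coset_H_eq_iff'[OF \<chi>G \<phi>G[OF a]] by simp
  qed
  then show ?thesis
    using \<phi> by (simp add: tail_eq_iff)
qed

end

text \<open>Conditions (I) and (II); (II) is only needed for the fixed element \<open>f1\<close> of degree one.\<close>

locale similarity_system = similarity_setting F G deg f1 H
  for F :: "('f, 'm) monoid_scheme" and G :: "('g, 'n) monoid_scheme" (structure)
    and deg :: "'f \<Rightarrow> int" and f1 :: 'f and H :: "'g set" +
  fixes \<Phi> :: "('f \<Rightarrow> 'g) set"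
  assumes Phi_hom: "\<Phi> \<subseteq> hom F G \<inter> extensional (carrier F)"
    and Phi_conj_closed: "\<And>h \<phi>. h \<in> H \<Longrightarrow> \<phi> \<in> \<Phi> \<Longrightarrow>
          restrict (\<lambda>f. inv h \<otimes> \<phi> f \<otimes> h) (carrier F) \<in> \<Phi>"
    and Phi_twist_closed: "\<And>\<phi> k \<psi>. \<phi> \<in> \<Phi> \<Longrightarrow> k \<in> phi_core F deg G H \<phi> \<Longrightarrow>
          \<psi> \<in> hom F G \<inter> extensional (carrier F) \<Longrightarrow> (\<forall>c\<in>carrier F. deg c = 0 \<longrightarrow> \<psi> c = \<phi> c) \<Longrightarrow>
          \<psi> f1 = \<phi> f1 \<otimes> k \<Longrightarrow> \<psi> \<in> \<Phi>"
begin

lemma Phi_homD: "\<phi> \<in> \<Phi> \<Longrightarrow> \<phi> \<in> hom F G"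
  using Phi_hom by blast

lemma conj_hom_in_Phi: "h \<in> H \<Longrightarrow> \<phi> \<in> \<Phi> \<Longrightarrow> conj_hom h \<phi> \<in> \<Phi>"
  using Phi_conj_closed[of "inv h" \<phi>] subgroup.m_inv_closed[OF subgroup_H] H_carrier
  by (simp add: conj_hom_def)

lemma same_tail_eqpoll_core:
  assumes \<phi>: "\<phi> \<in> \<Phi>"
  shows "{\<chi> \<in> \<Phi>. tail_H \<chi> = tail_H \<phi>} \<approx> core \<phi>"
proof -
  note \<phi>_hom = Phi_homD[OF \<phi>]
  have yG: "\<phi> f1 \<in> carrier G" using \<phi>_hom by (simp add: hom_in_carrier)
  have kG: "k \<in> carrier G" if "k \<in> core \<phi>" for k
    using that mem_core_iff[OF \<phi>_hom] by blast
  have twist_hom: "extend_hom \<phi> (\<phi> f1 \<otimes> k) \<in> hom F G" if k: "k \<in> core \<phi>" for k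
    using extend_hom_twist_hom[OF \<phi>_hom kG[OF k]] k mem_core_iff[OF \<phi>_hom] by blast
  have "bij_betw (\<lambda>\<chi>. inv (\<phi> f1) \<otimes> \<chi> f1) {\<chi> \<in> \<Phi>. tail_H \<chi> = tail_H \<phi>} (core \<phi>)"
  proof (rule bij_betw_byWitness[where f' = "\<lambda>k. extend_hom \<phi> (\<phi> f1 \<otimes> k)"])
    show "\<forall>\<chi>\<in>{\<chi> \<in> \<Phi>. tail_H \<chi> = tail_H \<phi>}. extend_hom \<phi> (\<phi> f1 \<otimes> (inv (\<phi> f1) \<otimes> \<chi> f1)) = \<chi>"
    proof
      fix \<chi> assume "\<chi> \<in> {\<chi> \<in> \<Phi>. tail_H \<chi> = tail_H \<phi>}"
      then have \<chi>: "\<chi> \<in> hom F G" "\<chi> \<in> extensional (carrier F)" "tail_H \<chi> = tail_H \<phi>"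
        using Phi_hom by auto
      then have "\<chi> = extend_hom \<phi> (\<chi> f1)"
        by (intro eq_extend_hom) (auto simp: tail_eq_iff)
      then show "extend_hom \<phi> (\<phi> f1 \<otimes> (inv (\<phi> f1) \<otimes> \<chi> f1)) = \<chi>"
        using yG hom_in_carrier[OF \<chi>(1) f1_carrier] by simp
    qed
    show "\<forall>k\<in>core \<phi>. inv (\<phi> f1) \<otimes> extend_hom \<phi> (\<phi> f1 \<otimes> k) f1 = k"
      using yG kG \<phi>_hom by simp
    show "(\<lambda>\<chi>. inv (\<phi> f1) \<otimes> \<chi> f1) ` {\<chi> \<in> \<Phi>. tail_H \<chi> = tail_H \<phi>} \<subseteq> core \<phi>"
      using same_tail_imp_mem_core Phi_homD \<phi>_hom by blast
    show "(\<lambda>k. extend_hom \<phi> (\<phi> f1 \<otimes> k)) ` core \<phi> \<subseteq> {\<chi> \<in> \<Phi>. tail_H \<chi> = tail_H \<phi>}"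
    proof (intro image_subsetI CollectI conjI)
      fix k assume k: "k \<in> core \<phi>"
      show "extend_hom \<phi> (\<phi> f1 \<otimes> k) \<in> \<Phi>"
      proof (rule Phi_twist_closed[OF \<phi> k])
        show "extend_hom \<phi> (\<phi> f1 \<otimes> k) \<in> hom F G \<inter> extensional (carrier F)"
          using twist_hom[OF k] by (simp add: extend_hom_def)
      qed (use \<phi>_hom yG kG[OF k] in simp_all)
      show "tail_H (extend_hom \<phi> (\<phi> f1 \<otimes> k)) = tail_H \<phi>"
        using tail_extend_hom_twist[OF \<phi>_hom k] .
    qed
  qed
  then show ?thesis unfolding eqpoll_def by blast
qed

lemma similarity_class_tails:
  assumes \<phi>: "\<phi> \<in> \<Phi>"
  shows "tail_H ` {\<psi> \<in> \<Phi>. similar F deg G H \<phi> \<psi>} = (\<lambda>h. tail_H (conj_hom h \<phi>)) ` H"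
  using similar_iff_tail_conj_hom[OF Phi_homD[OF \<phi>]] conj_hom_in_Phi[OF _ \<phi>] by fastforce

lemma similarity_class_tails_eqpoll:
  assumes \<phi>: "\<phi> \<in> \<Phi>"
  shows "tail_H ` {\<psi> \<in> \<Phi>. similar F deg G H \<phi> \<psi>} \<approx> lcosets_in G H (core \<phi>)"
proof -
  have "(\<lambda>h. tail_H (conj_hom h \<phi>)) ` H \<approx> (\<lambda>h. h <# core \<phi>) ` H"
    by (rule image_eqpoll_image_if_same_fibres) (rule tail_conj_hom_eq_iff_cosets[OF Phi_homD[OF \<phi>]])
  moreover have "lcosets_in G H (core \<phi>) = (\<lambda>h. h <# core \<phi>) ` H"
    unfolding lcosets_in_def by blast
  ultimately show ?thesis
    using similarity_class_tails[OF \<phi>] by simp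
qed

lemma same_tail_eqpoll_core_of_similar:
  assumes \<phi>: "\<phi> \<in> \<Phi>" and sim: "similar F deg G H \<phi> \<psi>"
  shows "{\<chi> \<in> \<Phi>. tail_H \<chi> = tail_H \<psi>} \<approx> core \<phi>"
proof -
  obtain h where h: "h \<in> H" and "tail_H \<psi> = tail_H (conj_hom h \<phi>)"
    using sim similar_iff_tail_conj_hom[OF Phi_homD[OF \<phi>]] by blast
  then have "{\<chi> \<in> \<Phi>. tail_H \<chi> = tail_H \<psi>} = {\<chi> \<in> \<Phi>. tail_H \<chi> = tail_H (conj_hom h \<phi>)}"
    by simp
  also have "\<dots> \<approx> core (conj_hom h \<phi>)"
    using same_tail_eqpoll_core[OF conj_hom_in_Phi[OF h \<phi>]] .
  also have "\<dots> \<approx> core \<phi>"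
    using core_conj_hom_eqpoll[OF Phi_homD[OF \<phi>] h] .
  finally show ?thesis .
qed

lemma similarity_class_eqpoll:
  assumes \<phi>: "\<phi> \<in> \<Phi>"
  shows "{\<psi> \<in> \<Phi>. similar F deg G H \<phi> \<psi>} \<approx> H"
proof -
  let ?C = "{\<psi> \<in> \<Phi>. similar F deg G H \<phi> \<psi>}"
  have "?C \<approx> tail_H ` ?C \<times> core \<phi>"
  proof (rule eqpoll_image_times_fibres)
    fix t assume "t \<in> tail_H ` ?C"
    then obtain \<psi> where \<psi>: "\<psi> \<in> ?C" "t = tail_H \<psi>" by blast
    have "{\<chi> \<in> ?C. tail_H \<chi> = t} = {\<chi> \<in> \<Phi>. tail_H \<chi> = tail_H \<psi>}"
      using \<psi> similar_iff_tail_conj_hom[OF Phi_homD[OF \<phi>]] by auto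
    then show "{\<chi> \<in> ?C. tail_H \<chi> = t} \<approx> core \<phi>"
      using same_tail_eqpoll_core_of_similar[OF \<phi>] \<psi> by simp
  qed
  also have "\<dots> \<approx> lcosets_in G H (core \<phi>) \<times> core \<phi>"
    using times_eqpoll_cong[OF similarity_class_tails_eqpoll[OF \<phi>] eqpoll_refl] .
  also have "lcosets_in G H (core \<phi>) = (\<lambda>h. h <# core \<phi>) ` H"
    unfolding lcosets_in_def by blast
  also have "(\<lambda>h. h <# core \<phi>) ` H \<times> core \<phi> \<approx> H"
    using G.subgroup_eqpoll_cosets_times[OF subgroup_H core_subgroup core_subset_H] Phi_homD[OF \<phi>]
    by (blast intro: eqpoll_sym)
  finally show ?thesis .
qed

end

theorem mainTheorem11:
  fixes F :: "('f, 'm) monoid_scheme" and deg :: "'f \<Rightarrow> int"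
    and G :: "('g, 'n) monoid_scheme" and H :: "'g set"
    and \<Phi> :: "('f \<Rightarrow> 'g) set"
  assumes idx: "indexed_group F deg"
    and grpG: "group G"
    and subH: "subgroup H G"
    and Phi_hom: "\<Phi> \<subseteq> hom F G \<inter> extensional (carrier F)"
    and I: "\<And>h \<phi>. h \<in> H \<Longrightarrow> \<phi> \<in> \<Phi> \<Longrightarrow>
              restrict (\<lambda>f. inv\<^bsub>G\<^esub> h \<otimes>\<^bsub>G\<^esub> \<phi> f \<otimes>\<^bsub>G\<^esub> h) (carrier F) \<in> \<Phi>"
    and II: "\<And>\<phi> h \<psi> f1. \<phi> \<in> \<Phi> \<Longrightarrow> h \<in> phi_core F deg G H \<phi> \<Longrightarrow>
              \<psi> \<in> hom F G \<inter> extensional (carrier F) \<Longrightarrow>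
              (\<forall>f\<in>carrier F. deg f = 0 \<longrightarrow> \<psi> f = \<phi> f) \<Longrightarrow>
              f1 \<in> carrier F \<Longrightarrow> deg f1 = 1 \<Longrightarrow> \<psi> f1 = \<phi> f1 \<otimes>\<^bsub>G\<^esub> h \<Longrightarrow> \<psi> \<in> \<Phi>"
  shows "\<forall>\<phi>\<in>\<Phi>.
           {\<psi> \<in> \<Phi>. similar F deg G H \<phi> \<psi>} \<approx> H
         \<and> tail F deg G H ` {\<psi> \<in> \<Phi>. similar F deg G H \<phi> \<psi>}
             \<approx> lcosets_in G H (phi_core F deg G H \<phi>)
         \<and> (\<forall>\<psi>\<in>\<Phi>. similar F deg G H \<phi> \<psi> \<longrightarrow>
              {\<chi> \<in> \<Phi>. tail F deg G H \<chi> = tail F deg G H \<psi>} \<approx> phi_core F deg G H \<phi>)"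
proof -
  have F: "group F" and deg: "deg \<in> hom F integer_group" and "1 \<in> deg ` carrier F"
    using idx unfolding indexed_group_def by auto
  then obtain f1 where f1: "f1 \<in> carrier F" "deg f1 = 1" by auto
  interpret similarity_system F G deg f1 H \<Phi>
    by (intro similarity_system.intro similarity_setting.intro split_indexed_group.intro
          split_indexed_group_axioms.intro similarity_setting_axioms.intro similarity_system_axioms.intro)
      (use F grpG deg f1 subH Phi_hom I II in auto)
  show ?thesis
    using similarity_class_eqpoll similarity_class_tails_eqpoll same_tail_eqpoll_core_of_similar
    by blast
qed

end
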